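(* Skeptic can weakly force the event \[ E_3:=\Bigl\{\xi:\ |s_n|>\sqrt n-1\ \text{for infinitely many } n\ \ \text{or}\ \ \bigl(\limsup_{n\to\infty}|s_n|=\infty\ \text{and}\ s_n\neq0\ \text{for all but finitely many } n\bigr)\Bigr\}. \]
   Context: Fair-coin game: in rounds $n=1,2,\dots$ Skeptic announces $M_n\in\mathbb{R}$ (depending only on $x_1,\dots,x_{n-1}$), then Reality announces $x_n\in\{-1,1\}$. A path is an infinite sequence $\xi=x_1x_2\cdots\in\{-1,1\}^{\mathbb{N}}$, and $\Omega$ is the set of paths. We write $s_n:=x_1+\cdots+x_n$, with $s_0=0$. The capital process of a strategy with zero initial capital is $\mathcal{K}^{\mathcal{P}}_n=\sum_{k=1}^nM_kx_k$. Skeptic weakly forces $E\subseteq\Omega$ if some strategy $\mathcal{P}$ has $\mathcal{K}^{\mathcal{P}}_n(\xi)\ge-1$ for all $\xi\in\Omega$ and $n\ge0$, and $\limsup_n\mathcal{K}^{\mathcal{P}}_n(\xi)=\infty$ for every $\xi\notin E$. *)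

theory Defs
  imports "HOL-Analysis.Analysis" "HOL-Library.Liminf_Limsup"
begin

text \<open>Paths: xi k is Reality's move x_(k+1), so rounds are indexed from 0.\<close>
definition paths :: "(nat \<Rightarrow> real) set" where
  "paths = {xi. \<forall>k. xi k \<in> {-1, 1}}"

definition S :: "(nat \<Rightarrow> real) \<Rightarrow> nat \<Rightarrow> real" where
  "S xi n = (\<Sum>k<n. xi k)"

text \<open>A strategy maps the history [x_1,...,x_(n-1)] to the move M_n.\<close>
type_synonym strategy = "real list \<Rightarrow> real"

definition capital :: "strategy \<Rightarrow> nat \<Rightarrow> (nat \<Rightarrow> real) \<Rightarrow> real" where
  "capital P n xi = (\<Sum>k<n. P (map xi [0..<k]) * xi k)"

definition weakly_forces :: "(nat \<Rightarrow> real) set \<Rightarrow> bool" where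
  "weakly_forces E \<longleftrightarrow> (\<exists>P::strategy.
      (\<forall>xi\<in>paths. \<forall>n. capital P n xi \<ge> -1) \<and>
      (\<forall>xi\<in>paths. xi \<notin> E \<longrightarrow> limsup (\<lambda>n. ereal (capital P n xi)) = \<infinity>))"

definition E3 :: "(nat \<Rightarrow> real) set" where
  "E3 = {xi \<in> paths. (\<exists>\<^sub>\<infinity>n. \<bar>S xi n\<bar> > sqrt (real n) - 1) \<or>
          (limsup (\<lambda>n. ereal \<bar>S xi n\<bar>) = \<infinity> \<and> (\<forall>\<^sub>F n in sequentially. S xi n \<noteq> 0))}"

end

theory Submission
  imports Defs "HOL-Real_Asymp.Real_Asymp"
begin

text \<open>
  Since every move is \<open>\<plusminus>1\<close>, the process \<open>n - s_n\<^sup>2\<close> is the capital of the strategy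
  \<open>M_n = -2 s_(n-1)\<close>. Start it at round \<open>m\<close> and stop it as soon as \<open>|s_n| > \<surd>n - 1\<close>: the
  capital is then \<open>(n - s_n\<^sup>2) - (m - s_m\<^sup>2) \<ge> -m\<close> throughout, because at the stopping time
  still \<open>|s_n| \<le> \<surd>n\<close>. If the path never leaves the region \<open>|s_n| \<le> \<surd>n - 1\<close> after round
  \<open>m\<close>, then \<open>n - s_n\<^sup>2 \<ge> 2\<surd>n - 1\<close> and the capital tends to infinity. Mixing these stopped
  strategies with weights \<open>2^-(m+1)\<close> keeps the capital above \<open>-(\<Sum>m. m/2^(m+1)) = -1\<close>, and
  it tends to infinity unless \<open>|s_n| > \<surd>n - 1\<close> infinitely often, which is already the first
  alternative of \<open>E3\<close>.
\<close>

lemma S_Suc: "S xi (Suc n) = S xi n + xi n"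
  by (simp add: S_def)

lemma S_history: "j \<le> n \<Longrightarrow> S ((!) (map xi [0..<n])) j = S xi j"
  by (simp add: S_def)

lemma capital_mixture:
  assumes "\<And>m h. length h < m \<Longrightarrow> P m h = 0"
  shows "capital (\<lambda>h. \<Sum>m\<le>length h. w m * P m h) n xi = (\<Sum>m<n. w m * capital (P m) n xi)"
proof -
  have "(\<Sum>m\<le>k. w m * P m (map xi [0..<k])) = (\<Sum>m<n. w m * P m (map xi [0..<k]))"
    if "k < n" for k
    using that assms by (intro sum.mono_neutral_left) auto
  then have "capital (\<lambda>h. \<Sum>m\<le>length h. w m * P m h) n xi
      = (\<Sum>k<n. \<Sum>m<n. w m * P m (map xi [0..<k]) * xi k)"
    by (simp add: capital_def sum_distrib_right)
  also have "\<dots> = (\<Sum>m<n. w m * capital (P m) n xi)"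
    by (subst sum.swap) (simp add: capital_def sum_distrib_left mult.assoc)
  finally show ?thesis .
qed

definition defect :: "(nat \<Rightarrow> real) \<Rightarrow> nat \<Rightarrow> real" where
  "defect xi n = real n - (S xi n)\<^sup>2"

lemma defect_Suc:
  assumes "xi \<in> paths"
  shows "defect xi (Suc n) - defect xi n = -2 * S xi n * xi n"
proof -
  have "xi n = 1 \<or> xi n = -1"
    using assms by (auto simp: paths_def)
  then show ?thesis
    by (auto simp: defect_def S_Suc power2_eq_square algebra_simps)
qed

lemma defect_le: "defect xi n \<le> real n"
  by (simp add: defect_def)

lemma defect_nonneg:
  assumes "\<bar>S xi n\<bar> \<le> sqrt (real n)"
  shows "defect xi n \<ge> 0"
proof -
  have "(S xi n)\<^sup>2 \<le> (sqrt (real n))\<^sup>2"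
    using power_mono[OF assms abs_ge_zero, of 2] by simp
  then show ?thesis
    by (simp add: defect_def)
qed

lemma defect_ge_sqrt:
  assumes "\<bar>S xi n\<bar> \<le> sqrt (real n) - 1"
  shows "defect xi n \<ge> 2 * sqrt (real n) - 1"
proof -
  have "(S xi n)\<^sup>2 \<le> (sqrt (real n) - 1)\<^sup>2"
    using power_mono[OF assms abs_ge_zero, of 2] by simp
  also have "\<dots> = real n - 2 * sqrt (real n) + 1"
    by (simp add: power2_diff)
  finally show ?thesis
    by (simp add: defect_def)
qed

definition stays_inside :: "(nat \<Rightarrow> real) \<Rightarrow> nat \<Rightarrow> nat \<Rightarrow> bool" where
  "stays_inside xi m k \<longleftrightarrow> m \<le> k \<and> (\<forall>j\<in>{m..k}. \<bar>S xi j\<bar> \<le> sqrt (real j) - 1)"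

lemma stays_inside_history:
  "stays_inside ((!) (map xi [0..<n])) m n \<longleftrightarrow> stays_inside xi m n"
  by (simp add: stays_inside_def S_history)

lemma stays_inside_mono: "stays_inside xi m n \<Longrightarrow> m \<le> k \<Longrightarrow> k \<le> n \<Longrightarrow> stays_inside xi m k"
  by (simp add: stays_inside_def)

text \<open>A history \<open>h\<close> is read as the path prefix \<open>(!) h\<close>, on which \<open>S\<close> is meaningful up to
  \<open>length h\<close>.\<close>
definition stopped_strategy :: "nat \<Rightarrow> strategy" where
  "stopped_strategy m h =
     (if stays_inside ((!) h) m (length h) then -2 * S ((!) h) (length h) else 0)"

lemma capital_stopped_strategy:
  assumes "xi \<in> paths"
  shows "capital (stopped_strategy m) n xi
    = (\<Sum>k<n. if stays_inside xi m k then defect xi (Suc k) - defect xi k else 0)"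
  using defect_Suc[OF assms]
  by (auto simp: capital_def stopped_strategy_def stays_inside_history S_history
      intro!: sum.cong)

lemma capital_stopped_strategy_inside:
  assumes "xi \<in> paths" and "stays_inside xi m n"
  shows "capital (stopped_strategy m) n xi = defect xi n - defect xi m"
proof -
  have "stays_inside xi m k \<longleftrightarrow> m \<le> k" if "k < n" for k
    using that assms(2) stays_inside_mono[of xi m n k] by (auto simp: stays_inside_def)
  then have "capital (stopped_strategy m) n xi = (\<Sum>k\<in>{m..<n}. defect xi (Suc k) - defect xi k)"
    unfolding capital_stopped_strategy[OF assms(1)]
    by (intro sum.mono_neutral_cong_right) auto
  also have "\<dots> = defect xi n - defect xi m"
    using assms(2) by (intro sum_Suc_diff') (simp add: stays_inside_def)
  finally show ?thesis .
qed

lemma capital_stopped_strategy_ge: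
  assumes "xi \<in> paths"
  shows "capital (stopped_strategy m) n xi \<ge> - real m"
proof (induction n)
  case 0
  then show ?case
    by (simp add: capital_def)
next
  case (Suc n)
  have step: "capital (stopped_strategy m) (Suc n) xi = capital (stopped_strategy m) n xi
      + (if stays_inside xi m n then defect xi (Suc n) - defect xi n else 0)"
    by (simp add: capital_stopped_strategy[OF assms])
  show ?case
  proof (cases "stays_inside xi m n")
    case True
    have "\<bar>S xi n\<bar> \<le> sqrt (real n) - 1"
      using True by (simp add: stays_inside_def)
    moreover have "xi n \<in> {-1, 1}"
      using assms by (simp add: paths_def)
    ultimately have "\<bar>S xi (Suc n)\<bar> \<le> sqrt (real n)"
      by (auto simp: S_Suc)
    also have "\<dots> \<le> sqrt (real (Suc n))"
      by simp
    finally have "defect xi (Suc n) \<ge> 0"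
      by (rule defect_nonneg)
    then show ?thesis
      using step True capital_stopped_strategy_inside[OF assms True] defect_le[of xi m]
      by simp
  next
    case False
    then show ?thesis
      using step Suc.IH by simp
  qed
qed

definition weight :: "nat \<Rightarrow> real" where
  "weight m = (1/2) ^ (m + 1)"

lemma weight_pos: "weight m > 0"
  by (simp add: weight_def)

lemma sum_weight_times_index: "(\<Sum>m<n. weight m * real m) = 1 - (real n + 1) / 2 ^ n"
  by (induction n) (auto simp: weight_def field_simps)

definition mixed_strategy :: strategy where
  "mixed_strategy h = (\<Sum>m\<le>length h. weight m * stopped_strategy m h)"

lemma capital_mixed_strategy:
  "capital mixed_strategy n xi = (\<Sum>m<n. weight m * capital (stopped_strategy m) n xi)"
  unfolding mixed_strategy_def
  by (rule capital_mixture) (simp add: stopped_strategy_def stays_inside_def)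

lemma weighted_stopped_capitals_ge:
  assumes "xi \<in> paths" and "B \<subseteq> {..<n}"
  shows "(\<Sum>m\<in>B. weight m * capital (stopped_strategy m) n xi) \<ge> -1"
proof -
  have "(\<Sum>m\<in>B. weight m * capital (stopped_strategy m) n xi) \<ge> - (\<Sum>m\<in>B. weight m * real m)"
    unfolding sum_negf[symmetric]
  proof (intro sum_mono)
    fix m
    show "- (weight m * real m) \<le> weight m * capital (stopped_strategy m) n xi"
      using mult_left_mono[OF capital_stopped_strategy_ge[OF assms(1)] less_imp_le[OF weight_pos]]
      by simp
  qed
  moreover have "(\<Sum>m\<in>B. weight m * real m) \<le> (\<Sum>m<n. weight m * real m)"
    using assms(2) by (intro sum_mono2) (auto intro!: mult_nonneg_nonneg less_imp_le[OF weight_pos])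
  moreover have "(\<Sum>m<n. weight m * real m) \<le> 1"
    by (simp add: sum_weight_times_index)
  ultimately show ?thesis
    by linarith
qed

lemma capital_mixed_strategy_ge: "xi \<in> paths \<Longrightarrow> capital mixed_strategy n xi \<ge> -1"
  unfolding capital_mixed_strategy by (rule weighted_stopped_capitals_ge) auto

lemma capital_mixed_strategy_tendsto:
  assumes "xi \<in> paths" and inside: "\<And>n. n \<ge> N \<Longrightarrow> \<bar>S xi n\<bar> \<le> sqrt (real n) - 1"
  shows "filterlim (\<lambda>n. capital mixed_strategy n xi) at_top sequentially"
proof -
  have lower: "capital mixed_strategy n xi \<ge> weight N * (2 * sqrt (real n) - 1 - defect xi N) - 1"
    if "n > N" for n
  proof -
    have "capital (stopped_strategy N) n xi = defect xi n - defect xi N"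
      using inside that
      by (intro capital_stopped_strategy_inside[OF assms(1)]) (auto simp: stays_inside_def)
    then have "capital (stopped_strategy N) n xi \<ge> 2 * sqrt (real n) - 1 - defect xi N"
      using defect_ge_sqrt[OF inside] that by simp
    then have "weight N * capital (stopped_strategy N) n xi
        \<ge> weight N * (2 * sqrt (real n) - 1 - defect xi N)"
      using weight_pos by (simp add: less_imp_le mult_left_mono)
    moreover have "capital mixed_strategy n xi = weight N * capital (stopped_strategy N) n xi
        + (\<Sum>m\<in>{..<n} - {N}. weight m * capital (stopped_strategy m) n xi)"
      unfolding capital_mixed_strategy using that by (subst sum.remove[of _ N]) auto
    moreover have "(\<Sum>m\<in>{..<n} - {N}. weight m * capital (stopped_strategy m) n xi) \<ge> -1"
      by (rule weighted_stopped_capitals_ge[OF assms(1)]) auto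
    ultimately show ?thesis
      by linarith
  qed
  have "filterlim (\<lambda>n. a * (2 * sqrt (real n) - 1 - c) - 1) at_top sequentially"
    if "a > 0" for a c :: real
    using that by real_asymp
  from this[OF weight_pos] show ?thesis
    by (rule filterlim_at_top_mono) (auto simp: eventually_sequentially intro!: exI[of _ "Suc N"] lower)
qed

theorem corollary1:
  shows "weakly_forces E3"
  unfolding weakly_forces_def
proof (intro exI[of _ mixed_strategy] conjI ballI allI impI)
  fix xi n
  assume "xi \<in> paths"
  then show "capital mixed_strategy n xi \<ge> -1"
    by (rule capital_mixed_strategy_ge)
next
  fix xi
  assume path: "xi \<in> paths" and "xi \<notin> E3"
  then have "\<forall>\<^sub>F n in sequentially. \<bar>S xi n\<bar> \<le> sqrt (real n) - 1"
    by (simp add: E3_def not_frequently not_less cofinite_eq_sequentially)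
  then obtain N where "\<And>n. n \<ge> N \<Longrightarrow> \<bar>S xi n\<bar> \<le> sqrt (real n) - 1"
    by (auto simp: eventually_sequentially)
  then have "filterlim (\<lambda>n. capital mixed_strategy n xi) at_top sequentially"
    by (rule capital_mixed_strategy_tendsto[OF path])
  then show "limsup (\<lambda>n. ereal (capital mixed_strategy n xi)) = \<infinity>"
    by (simp add: tendsto_PInfty_eq_at_top lim_imp_Limsup)
qed

end
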